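(* Let $t:\Sigma^*\to\Omega^*$ be a rational partial function with suffix-closed domain. If $X\subseteq\mathrm{dom}(t)$ is a context-free language and $t(X)$ has exponential growth, then $X$ has exponential $t$-growth and exponential $\overleftarrow{t}$-growth.
   Context: A partial function is rational if its graph is a rational subset of $\Sigma^*\times\Omega^*$. Suffix-closed: closed under taking suffixes. The suffix expansion $\overleftarrow{t}$ maps $a_1\cdots a_n\in\mathrm{dom}(t)$ to the sequence $(t(a_1\cdots a_n),t(a_2\cdots a_n),\dots,t(a_n))$. For a partial function $f$ and $X\subseteq\mathrm{dom}(f)$, the $f$-growth of $X$ is $n\mapsto|f(X\cap\Sigma^{\le n})|$; the growth of a language $Y\subseteq\Omega^*$ is $n\mapsto|Y\cap\Omega^{\le n}|$. A function $\gamma$ grows exponentially if there is $c>1$ with $\gamma(n)\ge c^n$ for infinitely many $n$. *)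

theory Defs
  imports Complex_Main "HOL-Library.Sublist"
begin

definition pair_concat :: "('a list \<times> 'b list) set \<Rightarrow> ('a list \<times> 'b list) set \<Rightarrow> ('a list \<times> 'b list) set" where
  "pair_concat A B = {(u1 @ u2, v1 @ v2) | u1 u2 v1 v2. (u1, v1) \<in> A \<and> (u2, v2) \<in> B}"

inductive_set pair_star :: "('a list \<times> 'b list) set \<Rightarrow> ('a list \<times> 'b list) set"
  for A where
  star_empty: "([], []) \<in> pair_star A"
| star_step: "(u1, v1) \<in> A \<Longrightarrow> (u2, v2) \<in> pair_star A \<Longrightarrow> (u1 @ u2, v1 @ v2) \<in> pair_star A"

inductive_set rational_sets :: "('a list \<times> 'b list) set set" where
  rat_finite: "finite S \<Longrightarrow> S \<in> rational_sets"
| rat_union: "A \<in> rational_sets \<Longrightarrow> B \<in> rational_sets \<Longrightarrow> A \<union> B \<in> rational_sets"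
| rat_concat: "A \<in> rational_sets \<Longrightarrow> B \<in> rational_sets \<Longrightarrow> pair_concat A B \<in> rational_sets"
| rat_star: "A \<in> rational_sets \<Longrightarrow> pair_star A \<in> rational_sets"

definition graph :: "('a list \<Rightarrow> 'b list option) \<Rightarrow> ('a list \<times> 'b list) set" where
  "graph t = {(u, v). t u = Some v}"

definition rational_pfun :: "('a list \<Rightarrow> 'b list option) \<Rightarrow> bool" where
  "rational_pfun t \<longleftrightarrow> graph t \<in> rational_sets"

definition suffix_closed :: "'a list set \<Rightarrow> bool" where
  "suffix_closed L \<longleftrightarrow> (\<forall>u \<in> L. \<forall>v. suffix v u \<longrightarrow> v \<in> L)"

definition pimage :: "('a \<Rightarrow> 'b option) \<Rightarrow> 'a set \<Rightarrow> 'b set" where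
  "pimage f A = {v. \<exists>u \<in> A. f u = Some v}"

definition suffix_expansion :: "('a list \<Rightarrow> 'b list option) \<Rightarrow> 'a list \<Rightarrow> 'b list list option" where
  "suffix_expansion t w =
     (if w \<in> dom t then Some (map (\<lambda>i. the (t (drop i w))) [0..<length w]) else None)"

definition f_growth :: "('a list \<Rightarrow> 'c option) \<Rightarrow> 'a list set \<Rightarrow> nat \<Rightarrow> nat" where
  "f_growth f X n = card (pimage f (X \<inter> {w. length w \<le> n}))"

definition lang_growth :: "'b list set \<Rightarrow> nat \<Rightarrow> nat" where
  "lang_growth Y n = card (Y \<inter> {v. length v \<le> n})"

definition grows_exponentially :: "(nat \<Rightarrow> nat) \<Rightarrow> bool" where
  "grows_exponentially \<gamma> \<longleftrightarrow> (\<exists>c::real. c > 1 \<and> infinite {n. c ^ n \<le> real (\<gamma> n)})"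

inductive cfg_step :: "(nat \<times> (nat + 'a) list) set \<Rightarrow> (nat + 'a) list \<Rightarrow> (nat + 'a) list \<Rightarrow> bool"
  for P where
  "(A, rhs) \<in> P \<Longrightarrow> cfg_step P (u @ [Inl A] @ v) (u @ rhs @ v)"

definition cfg_lang :: "(nat \<times> (nat + 'a) list) set \<Rightarrow> nat \<Rightarrow> 'a list set" where
  "cfg_lang P S = {w. (cfg_step P)\<^sup>*\<^sup>* [Inl S] (map Inr w)}"

definition context_free :: "'a list set \<Rightarrow> bool" where
  "context_free X \<longleftrightarrow> (\<exists>P S. finite P \<and> X = cfg_lang P S)"

end

theory Submission
  imports Defs
begin

text \<open>The graph of \<open>t\<close> is accepted by a finite transducer and \<open>X\<close> is generated by a grammar.
  Annotating the nodes of a derivation tree with transducer states gives finitely many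
  configurations, and a pumping argument on them shows that every \<open>v \<in> t(X)\<close> has a preimage in
  \<open>X\<close> of length at most \<open>L (|v| + 1)\<close>: subtrees producing no output can be replaced by ones of
  bounded size, and along a chain of subtrees producing the same nonempty output only boundedly
  many silent siblings are needed. So the words of length at most \<open>n\<close> in \<open>t(X)\<close> are images of
  words of length at most \<open>L (n + 1)\<close> in \<open>X\<close>, which carries exponential growth over to the
  \<open>t\<close>-growth of \<open>X\<close>. The suffix expansion of a nonempty word starts with its \<open>t\<close>-image, so the
  two growth functions differ by at most one.\<close>

section \<open>Finite transducers\<close>

definition list_of_option :: "'x option \<Rightarrow> 'x list" where
  "list_of_option z = (case z of None \<Rightarrow> [] | Some x \<Rightarrow> [x])"

lemma list_of_option_simps [simp]: "list_of_option None = []" "list_of_option (Some x) = [x]"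
  by (simp_all add: list_of_option_def)

type_synonym ('a, 'b) transducer = "(nat \<times> ('a option \<times> 'b option) \<times> nat) set"

inductive run :: "('a, 'b) transducer \<Rightarrow> nat \<Rightarrow> 'a list \<Rightarrow> 'b list \<Rightarrow> nat \<Rightarrow> bool"
  for T where
  run_nil: "run T p [] [] p"
| run_cons: "(p, (a, b), p') \<in> T \<Longrightarrow> run T p' u v q \<Longrightarrow>
    run T p (list_of_option a @ u) (list_of_option b @ v) q"

definition accepted :: "nat set \<Rightarrow> nat set \<Rightarrow> ('a, 'b) transducer \<Rightarrow> ('a list \<times> 'b list) set" where
  "accepted I F T = {(u, v). \<exists>p\<in>I. \<exists>q\<in>F. run T p u v q}"

definition transducer_rel :: "('a list \<times> 'b list) set \<Rightarrow> bool" where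
  "transducer_rel R \<longleftrightarrow>
     (\<exists>I F (T :: ('a, 'b) transducer). finite I \<and> finite F \<and> finite T \<and> R = accepted I F T)"

lemma run_append: "run T p u1 v1 r \<Longrightarrow> run T r u2 v2 q \<Longrightarrow> run T p (u1 @ u2) (v1 @ v2) q"
  by (induction rule: run.induct) (auto intro: run.intros)

lemma run_mono: "run T p u v q \<Longrightarrow> T \<subseteq> T' \<Longrightarrow> run T' p u v q"
  by (induction rule: run.induct) (auto intro: run.intros)

lemma run_single: "(p, (a, b), q) \<in> T \<Longrightarrow> run T p (list_of_option a) (list_of_option b) q"
  using run_cons[OF _ run_nil, of p a b q T] by simp

lemma run_split:
  "run T p (u1 @ u2) v q \<Longrightarrow> \<exists>r v1 v2. v = v1 @ v2 \<and> run T p u1 v1 r \<and> run T r u2 v2 q"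
proof (induction p "u1 @ u2" v q arbitrary: u1 rule: run.induct)
  case (run_nil p)
  then show ?case by (auto intro: run.run_nil)
next
  case (run_cons p a b p' u v q)
  have step: "run T p (list_of_option a @ u) (list_of_option b @ v) q"
    using run_cons.hyps(1,2) by (rule run.run_cons)
  consider "u1 = []" | u1' where "u1 = list_of_option a @ u1'" "u = u1' @ u2"
    using run_cons.hyps(4) by (cases a; cases u1) auto
  then show ?case
  proof cases
    case 1
    then show ?thesis using run_cons.hyps(4) step run.run_nil by fastforce
  next
    case (2 u1')
    then obtain r v1 v2 where "v = v1 @ v2" "run T p' u1' v1 r" "run T r u2 v2 q"
      using run_cons.hyps(3) by blast
    moreover from this(2) have "run T p u1 (list_of_option b @ v1) r"
      unfolding 2(1) by (rule run.run_cons[OF run_cons.hyps(1)])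
    ultimately show ?thesis
      by (intro exI[of _ r] exI[of _ "list_of_option b @ v1"] exI[of _ v2]) simp
  qed
qed

lemma run_no_transition: "run T p u v q \<Longrightarrow> (\<And>l r. (p, l, r) \<notin> T) \<Longrightarrow> u = [] \<and> v = [] \<and> q = p"
  by (erule run.cases) auto

definition relabel :: "(nat \<Rightarrow> nat) \<Rightarrow> ('a, 'b) transducer \<Rightarrow> ('a, 'b) transducer" where
  "relabel f T = (\<lambda>(p, l, q). (f p, l, f q)) ` T"

lemma run_relabel: "run T p u v q \<Longrightarrow> run (relabel f T) (f p) u v (f q)"
proof (induction rule: run.induct)
  case (run_cons p a b p' u v q)
  have "(f p, (a, b), f p') \<in> relabel f T"
    using run_cons(1) unfolding relabel_def by force
  then show ?case using run_cons(3) by (rule run.run_cons)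
qed (rule run.run_nil)

definition sum_transducer ::
  "('a, 'b) transducer \<Rightarrow> ('a, 'b) transducer \<Rightarrow> (nat \<times> nat) set \<Rightarrow> ('a, 'b) transducer" where
  "sum_transducer T1 T2 B = relabel (\<lambda>p. 2 * p) T1 \<union> relabel (\<lambda>p. 2 * p + 1) T2
     \<union> (\<lambda>(f, i). (2 * f, (None, None), 2 * i + 1)) ` B"

lemma finite_sum_transducer:
  "finite T1 \<Longrightarrow> finite T2 \<Longrightarrow> finite B \<Longrightarrow> finite (sum_transducer T1 T2 B)"
  unfolding sum_transducer_def relabel_def by simp

lemma run_sum_transducer_left: "run T1 p u v q \<Longrightarrow> run (sum_transducer T1 T2 B) (2 * p) u v (2 * q)"
  by (rule run_mono[OF run_relabel]) (auto simp: sum_transducer_def)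

lemma run_sum_transducer_right:
  "run T2 p u v q \<Longrightarrow> run (sum_transducer T1 T2 B) (2 * p + 1) u v (2 * q + 1)"
  by (rule run_mono[OF run_relabel]) (auto simp: sum_transducer_def)

lemma run_sum_transducer_bridge:
  assumes "(f, i) \<in> B" "run T2 i u v q"
  shows "run (sum_transducer T1 T2 B) (2 * f) u v (2 * q + 1)"
proof -
  have "(2 * f, (None, None), 2 * i + 1) \<in> sum_transducer T1 T2 B"
    using assms(1) unfolding sum_transducer_def by force
  from run_cons[OF this run_sum_transducer_right[OF assms(2)]] show ?thesis by simp
qed

lemma run_sum_transducer_from_right:
  "run (sum_transducer T1 T2 B) x u v y \<Longrightarrow> x = 2 * p + 1 \<Longrightarrow> \<exists>q. y = 2 * q + 1 \<and> run T2 p u v q"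
proof (induction arbitrary: p rule: run.induct)
  case (run_cons x a b x' u v y)
  then obtain p' where "x' = 2 * p' + 1" "(p, (a, b), p') \<in> T2"
    unfolding sum_transducer_def relabel_def by auto presburger+
  with run_cons.IH show ?case by (auto intro: run.run_cons)
qed (auto intro: run.run_nil)

lemma run_sum_transducer_from_left:
  "run (sum_transducer T1 T2 B) x u v y \<Longrightarrow> x = 2 * p \<Longrightarrow>
     (\<exists>q. y = 2 * q \<and> run T1 p u v q) \<or>
     (\<exists>f i q u1 u2 v1 v2. (f, i) \<in> B \<and> y = 2 * q + 1 \<and> u = u1 @ u2 \<and> v = v1 @ v2 \<and>
        run T1 p u1 v1 f \<and> run T2 i u2 v2 q)"
proof (induction arbitrary: p rule: run.induct)
  case (run_cons x a b x' u v y)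
  then consider p' where "x' = 2 * p'" "(p, (a, b), p') \<in> T1"
    | i where "(p, i) \<in> B" "x' = 2 * i + 1" "a = None" "b = None"
    unfolding sum_transducer_def relabel_def by auto presburger+
  then show ?case
  proof cases
    case 1
    with run_cons.IH show ?thesis
      by (smt (verit) append_Cons append_Nil append_assoc run.run_cons)
  next
    case 2
    with run_sum_transducer_from_right[OF run_cons(2)] show ?thesis
      by (metis list_of_option_simps(1) run.run_nil)
  qed
qed (auto intro: run.run_nil)

lemma transducer_rel_empty: "transducer_rel {}"
  unfolding transducer_rel_def accepted_def by (intro exI[of _ "{}"]) auto

lemma transducer_rel_step: "transducer_rel {(list_of_option a, list_of_option b)}"
proof -
  let ?T = "{(0 :: nat, (a, b), 1 :: nat)}"
  have "run ?T 0 u v 1 \<longleftrightarrow> u = list_of_option a \<and> v = list_of_option b" for u v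
  proof
    assume "run ?T 0 u v 1"
    then show "u = list_of_option a \<and> v = list_of_option b"
    proof cases
      case (run_cons a' b' p' u' v')
      moreover have "(1, l, r) \<notin> ?T" for l r by simp
      ultimately show ?thesis using run_no_transition[of ?T 1 u' v' 1] by auto
    qed simp
  qed (auto intro: run_single)
  then have "{(list_of_option a, list_of_option b)} = accepted {0} {1} ?T"
    unfolding accepted_def by auto
  then show ?thesis unfolding transducer_rel_def
    by (intro exI[of _ "{0}"] exI[of _ "{1}"] exI[of _ ?T]) simp
qed

lemma parity_image_iff [simp]:
  "(2 * q :: nat) \<in> (\<lambda>p. 2 * p) ` A \<longleftrightarrow> q \<in> A"
  "Suc (2 * q) \<in> (\<lambda>p. Suc (2 * p)) ` A \<longleftrightarrow> q \<in> A"
  "2 * q \<notin> (\<lambda>p. Suc (2 * p)) ` A"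
  "Suc (2 * q) \<notin> (\<lambda>p. 2 * p) ` A"
  by (auto; presburger)+

lemma transducer_rel_union:
  assumes "transducer_rel (A :: ('a list \<times> 'b list) set)" "transducer_rel B"
  shows "transducer_rel (A \<union> B)"
proof -
  obtain I1 F1 and T1 :: "('a, 'b) transducer"
    where fin1: "finite I1" "finite F1" "finite T1" and A: "A = accepted I1 F1 T1"
    using assms(1) unfolding transducer_rel_def by blast
  obtain I2 F2 and T2 :: "('a, 'b) transducer"
    where fin2: "finite I2" "finite F2" "finite T2" and B: "B = accepted I2 F2 T2"
    using assms(2) unfolding transducer_rel_def by blast
  define T where "T = sum_transducer T1 T2 {}"
  define I where "I = (\<lambda>p. 2 * p) ` I1 \<union> (\<lambda>p. 2 * p + 1) ` I2"
  define F where "F = (\<lambda>p. 2 * p) ` F1 \<union> (\<lambda>p. 2 * p + 1) ` F2"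
  have "(u, v) \<in> A \<union> B" if "p \<in> I" "q \<in> F" and r: "run T p u v q" for u v p q
  proof -
    from \<open>p \<in> I\<close> consider p1 where "p1 \<in> I1" "p = 2 * p1" | p2 where "p2 \<in> I2" "p = 2 * p2 + 1"
      unfolding I_def by blast
    then show ?thesis
    proof cases
      case 1
      with run_sum_transducer_from_left[OF r[unfolded T_def]] obtain q1
        where "q = 2 * q1" "run T1 p1 u v q1" by blast
      moreover from \<open>q \<in> F\<close> this(1) have "q1 \<in> F1" unfolding F_def by simp
      ultimately show ?thesis using 1 A unfolding accepted_def by blast
    next
      case 2
      with run_sum_transducer_from_right[OF r[unfolded T_def]] obtain q2
        where "q = 2 * q2 + 1" "run T2 p2 u v q2" by blast
      moreover from \<open>q \<in> F\<close> this(1) have "q2 \<in> F2" unfolding F_def by simp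
      ultimately show ?thesis using 2 B unfolding accepted_def by blast
    qed
  qed
  then have "accepted I F T \<subseteq> A \<union> B" unfolding accepted_def by blast
  moreover have "A \<union> B \<subseteq> accepted I F T"
  proof clarify
    fix u v assume "(u, v) \<in> A \<union> B"
    then consider p q where "p \<in> I1" "q \<in> F1" "run T1 p u v q"
      | p q where "p \<in> I2" "q \<in> F2" "run T2 p u v q"
      unfolding A B accepted_def by blast
    then show "(u, v) \<in> accepted I F T"
    proof cases
      case 1
      with run_sum_transducer_left[OF 1(3)] show ?thesis
        unfolding accepted_def I_def F_def T_def by fastforce
    next
      case 2
      with run_sum_transducer_right[OF 2(3)] show ?thesis
        unfolding accepted_def I_def F_def T_def by fastforce
    qed
  qed
  moreover have "finite I" "finite F" "finite T"
    using fin1 fin2 unfolding I_def F_def T_def by (auto intro!: finite_sum_transducer)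
  ultimately show ?thesis unfolding transducer_rel_def by (meson subset_antisym)
qed

lemma transducer_rel_concat:
  assumes "transducer_rel (A :: ('a list \<times> 'b list) set)" "transducer_rel B"
  shows "transducer_rel (pair_concat A B)"
proof -
  obtain I1 F1 and T1 :: "('a, 'b) transducer"
    where fin1: "finite I1" "finite F1" "finite T1" and A: "A = accepted I1 F1 T1"
    using assms(1) unfolding transducer_rel_def by blast
  obtain I2 F2 and T2 :: "('a, 'b) transducer"
    where fin2: "finite I2" "finite F2" "finite T2" and B: "B = accepted I2 F2 T2"
    using assms(2) unfolding transducer_rel_def by blast
  define T where "T = sum_transducer T1 T2 (F1 \<times> I2)"
  define I where "I = (\<lambda>p. 2 * p) ` I1"
  define F where "F = (\<lambda>p. 2 * p + 1) ` F2"
  have "(u, v) \<in> pair_concat A B" if "p \<in> I" "q \<in> F" and r: "run T p u v q" for u v p q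
  proof -
    from that obtain p1 q2 where "p1 \<in> I1" "p = 2 * p1" "q2 \<in> F2" "q = 2 * q2 + 1"
      unfolding I_def F_def by blast
    moreover from this(4) have "q \<noteq> 2 * q'" for q' by presburger
    ultimately obtain f i u1 u2 v1 v2 where "f \<in> F1" "i \<in> I2"
      "u = u1 @ u2" "v = v1 @ v2" "run T1 p1 u1 v1 f" "run T2 i u2 v2 q2"
      using run_sum_transducer_from_left[OF r[unfolded T_def]] by auto
    then have "(u1, v1) \<in> A" "(u2, v2) \<in> B"
      using \<open>p1 \<in> I1\<close> \<open>q2 \<in> F2\<close> unfolding A B accepted_def by blast+
    then show ?thesis
      using \<open>u = u1 @ u2\<close> \<open>v = v1 @ v2\<close> unfolding pair_concat_def by blast
  qed
  then have "accepted I F T \<subseteq> pair_concat A B" unfolding accepted_def by blast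
  moreover have "pair_concat A B \<subseteq> accepted I F T"
  proof
    fix x assume "x \<in> pair_concat A B"
    then obtain u1 u2 v1 v2 p f i q where "x = (u1 @ u2, v1 @ v2)"
      "p \<in> I1" "f \<in> F1" "run T1 p u1 v1 f" "i \<in> I2" "q \<in> F2" "run T2 i u2 v2 q"
      unfolding pair_concat_def A B accepted_def by blast
    moreover from this have "run T (2 * p) (u1 @ u2) (v1 @ v2) (2 * q + 1)"
      unfolding T_def
      by (intro run_append[OF run_sum_transducer_left run_sum_transducer_bridge]) auto
    ultimately show "x \<in> accepted I F T" unfolding accepted_def I_def F_def by auto
  qed
  moreover have "finite I" "finite F" "finite T"
    using fin1 fin2 unfolding I_def F_def T_def by (auto intro!: finite_sum_transducer)
  ultimately show ?thesis unfolding transducer_rel_def by (meson subset_antisym)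
qed

definition star_transducer :: "nat set \<Rightarrow> nat set \<Rightarrow> ('a, 'b) transducer \<Rightarrow> ('a, 'b) transducer" where
  "star_transducer I F T = relabel Suc T \<union> (\<lambda>i. (0, (None, None), Suc i)) ` I
     \<union> (\<lambda>f. (Suc f, (None, None), 0)) ` F"

lemma run_star_transducer_sound:
  assumes "run (star_transducer I F T) x u v 0"
  shows "(x = 0 \<longrightarrow> (u, v) \<in> pair_star (accepted I F T)) \<and>
    (\<forall>p. x = Suc p \<longrightarrow> (\<exists>f\<in>F. \<exists>u1 u2 v1 v2. u = u1 @ u2 \<and> v = v1 @ v2 \<and>
       run T p u1 v1 f \<and> (u2, v2) \<in> pair_star (accepted I F T)))"
  using assms
proof (induction x u v "0 :: nat" rule: run.induct)
  case run_nil
  then show ?case by (auto intro: pair_star.star_empty)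
next
  case (run_cons x a b x' u v)
  from run_cons.hyps(1) consider p p' where "x = Suc p" "x' = Suc p'" "(p, (a, b), p') \<in> T"
    | i where "x = 0" "i \<in> I" "x' = Suc i" "a = None" "b = None"
    | f where "x = Suc f" "f \<in> F" "x' = 0" "a = None" "b = None"
    unfolding star_transducer_def relabel_def by auto
  then show ?case
  proof cases
    case (1 p p')
    with run_cons.hyps(3) obtain f u1 u2 v1 v2 where "f \<in> F" "u = u1 @ u2" "v = v1 @ v2"
      "run T p' u1 v1 f" "(u2, v2) \<in> pair_star (accepted I F T)" by blast
    moreover have "run T p (list_of_option a @ u1) (list_of_option b @ v1) f"
      using 1(3) \<open>run T p' u1 v1 f\<close> by (rule run.run_cons)
    moreover have "list_of_option a @ u = (list_of_option a @ u1) @ u2"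
      "list_of_option b @ v = (list_of_option b @ v1) @ v2"
      using \<open>u = u1 @ u2\<close> \<open>v = v1 @ v2\<close> by simp_all
    ultimately have "\<exists>f\<in>F. \<exists>u1 u2 v1 v2. list_of_option a @ u = u1 @ u2 \<and>
        list_of_option b @ v = v1 @ v2 \<and> run T p u1 v1 f \<and> (u2, v2) \<in> pair_star (accepted I F T)"
      by blast
    with 1(1) show ?thesis by simp
  next
    case (2 i)
    with run_cons.hyps(3) obtain f u1 u2 v1 v2 where "f \<in> F" "u = u1 @ u2" "v = v1 @ v2"
      "run T i u1 v1 f" "(u2, v2) \<in> pair_star (accepted I F T)" by blast
    moreover from 2 this have "(u1, v1) \<in> accepted I F T" unfolding accepted_def by blast
    ultimately have "(u, v) \<in> pair_star (accepted I F T)" by (simp add: pair_star.star_step)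
    with 2 show ?thesis by simp
  next
    case (3 f)
    with run_cons.hyps(3) have "(u, v) \<in> pair_star (accepted I F T)" by simp
    moreover have "u = [] @ u" "v = [] @ v" by simp_all
    ultimately have "\<exists>g\<in>F. \<exists>u1 u2 v1 v2. u = u1 @ u2 \<and> v = v1 @ v2 \<and> run T f u1 v1 g \<and>
        (u2, v2) \<in> pair_star (accepted I F T)"
      using run.run_nil[of T f] 3(2) by blast
    with 3 show ?thesis by simp
  qed
qed

lemma run_star_transducer_complete:
  "(u, v) \<in> pair_star (accepted I F T) \<Longrightarrow> run (star_transducer I F T) 0 u v 0"
proof (induction u v rule: pair_star.induct)
  case star_empty
  then show ?case by (rule run.run_nil)
next
  case (star_step u1 v1 u2 v2)
  then obtain i f where "i \<in> I" "f \<in> F" "run T i u1 v1 f" unfolding accepted_def by blast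
  have "run (star_transducer I F T) (Suc i) u1 v1 (Suc f)"
    by (rule run_mono[OF run_relabel[OF \<open>run T i u1 v1 f\<close>]]) (auto simp: star_transducer_def)
  moreover have "(Suc f, (None, None), 0) \<in> star_transducer I F T"
    "(0, (None, None), Suc i) \<in> star_transducer I F T"
    using \<open>i \<in> I\<close> \<open>f \<in> F\<close> unfolding star_transducer_def by blast+
  ultimately have "run (star_transducer I F T) (Suc i) (u1 @ u2) (v1 @ v2) 0"
    using run_append run.run_cons[OF _ star_step.IH] by fastforce
  with \<open>(0, (None, None), Suc i) \<in> star_transducer I F T\<close> show ?case
    using run.run_cons by fastforce
qed

lemma transducer_rel_star:
  assumes "transducer_rel (A :: ('a list \<times> 'b list) set)"
  shows "transducer_rel (pair_star A)"
proof -
  obtain I F and T :: "('a, 'b) transducer"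
    where fin: "finite I" "finite F" "finite T" and A: "A = accepted I F T"
    using assms unfolding transducer_rel_def by blast
  have "(u, v) \<in> pair_star A \<longleftrightarrow> run (star_transducer I F T) 0 u v 0" for u v
    using run_star_transducer_sound[of I F T 0 u v] run_star_transducer_complete
    unfolding A by blast
  then have "pair_star A = accepted {0} {0} (star_transducer I F T)"
    unfolding accepted_def by auto
  moreover have "finite (star_transducer I F T)"
    using fin unfolding star_transducer_def relabel_def by simp
  ultimately show ?thesis unfolding transducer_rel_def
    by (intro exI[of _ "{0}"] exI[of _ "star_transducer I F T"]) simp
qed

lemma transducer_rel_singleton: "transducer_rel {(u :: 'a list, v :: 'b list)}"
proof (induction u)
  case Nil
  show ?case
  proof (induction v)
    case Nil
    show ?case using transducer_rel_step[of None None] by simp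
  next
    case (Cons b v)
    from transducer_rel_concat[OF transducer_rel_step[of None "Some b"] this] show ?case
      by (simp add: pair_concat_def)
  qed
next
  case (Cons a u)
  from transducer_rel_concat[OF transducer_rel_step[of "Some a" None] this] show ?case
    by (simp add: pair_concat_def)
qed

lemma transducer_rel_finite: "finite S \<Longrightarrow> transducer_rel S"
proof (induction rule: finite_induct)
  case (insert x S)
  obtain u v where "x = (u, v)" by fastforce
  with transducer_rel_union[OF transducer_rel_singleton[of u v] insert.IH] show ?case by simp
qed (rule transducer_rel_empty)

lemma rational_sets_transducer_rel: "R \<in> rational_sets \<Longrightarrow> transducer_rel R"
  by (induction rule: rational_sets.induct)
    (simp_all add: transducer_rel_finite transducer_rel_union transducer_rel_concat transducer_rel_star)

section \<open>Derivations of context-free grammars\<close>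

inductive derives :: "(nat \<times> (nat + 'a) list) set \<Rightarrow> (nat + 'a) list \<Rightarrow> 'a list \<Rightarrow> bool"
  for P where
  derives_nil: "derives P [] []"
| derives_terminal: "derives P \<alpha> w \<Longrightarrow> derives P (Inr a # \<alpha>) (a # w)"
| derives_nonterminal: "(A, rhs) \<in> P \<Longrightarrow> derives P rhs w1 \<Longrightarrow> derives P \<alpha> w2 \<Longrightarrow>
    derives P (Inl A # \<alpha>) (w1 @ w2)"

lemma derives_Nil_iff [simp]: "derives P [] w \<longleftrightarrow> w = []"
  by (auto elim: derives.cases intro: derives_nil)

lemma derives_Inr_iff [simp]: "derives P (Inr a # \<alpha>) w \<longleftrightarrow> (\<exists>w'. w = a # w' \<and> derives P \<alpha> w')"
  by (auto elim: derives.cases intro: derives_terminal)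

lemma derives_Inl_iff [simp]:
  "derives P (Inl A # \<alpha>) w \<longleftrightarrow>
     (\<exists>rhs w1 w2. (A, rhs) \<in> P \<and> w = w1 @ w2 \<and> derives P rhs w1 \<and> derives P \<alpha> w2)"
  by (subst derives.simps) blast

lemma derives_append_iff:
  "derives P (\<alpha> @ \<beta>) w \<longleftrightarrow> (\<exists>w1 w2. w = w1 @ w2 \<and> derives P \<alpha> w1 \<and> derives P \<beta> w2)"
proof (induction \<alpha> arbitrary: w)
  case (Cons x \<alpha>)
  show ?case
  proof (cases x)
    case (Inl A)
    show ?thesis unfolding Inl append_Cons derives_Inl_iff Cons.IH
      by (metis append.assoc)
  next
    case (Inr a)
    show ?thesis unfolding Inr append_Cons derives_Inr_iff Cons.IH
      by (metis append_Cons)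
  qed
qed simp

lemma derives_map_Inr: "derives P (map Inr w) w"
  by (induction w) simp_all

lemma cfg_step_derives:
  assumes "cfg_step P \<alpha> \<beta>" "derives P \<beta> w"
  shows "derives P \<alpha> w"
  using assms
proof cases
  case (1 A rhs u v)
  with assms(2) obtain w1 w2 w3 where
    "w = w1 @ w2 @ w3" "derives P u w1" "derives P rhs w2" "derives P v w3"
    by (auto simp: derives_append_iff)
  moreover from 1 \<open>derives P rhs w2\<close> \<open>derives P v w3\<close> have "derives P (Inl A # v) (w2 @ w3)"
    by auto
  ultimately show ?thesis using 1 by (auto simp del: derives_Inl_iff simp: derives_append_iff)
qed

lemma cfg_step_append: "cfg_step P \<alpha> \<beta> \<Longrightarrow> cfg_step P (x @ \<alpha> @ y) (x @ \<beta> @ y)"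
  by (induction rule: cfg_step.induct) (metis append.assoc cfg_step.intros)

lemma cfg_steps_append:
  "(cfg_step P)\<^sup>*\<^sup>* \<alpha> \<beta> \<Longrightarrow> (cfg_step P)\<^sup>*\<^sup>* (x @ \<alpha> @ y) (x @ \<beta> @ y)"
  by (induction rule: rtranclp_induct) (auto intro: rtranclp.rtrancl_into_rtrancl cfg_step_append)

lemma derives_cfg_steps: "derives P \<alpha> w \<Longrightarrow> (cfg_step P)\<^sup>*\<^sup>* \<alpha> (map Inr w)"
proof (induction rule: derives.induct)
  case (derives_terminal \<alpha> w a)
  then show ?case using cfg_steps_append[OF derives_terminal.IH, of "[Inr a]" "[]"] by simp
next
  case (derives_nonterminal A rhs w1 \<alpha> w2)
  have "cfg_step P (Inl A # \<alpha>) (rhs @ \<alpha>)"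
    using cfg_step.intros[OF derives_nonterminal(1), of "[]"] by simp
  moreover have "(cfg_step P)\<^sup>*\<^sup>* (rhs @ \<alpha>) (map Inr w1 @ \<alpha>)"
    using cfg_steps_append[OF derives_nonterminal.IH(1), of "[]"] by simp
  moreover have "(cfg_step P)\<^sup>*\<^sup>* (map Inr w1 @ \<alpha>) (map Inr (w1 @ w2))"
    using cfg_steps_append[OF derives_nonterminal.IH(2), of "map Inr w1" "[]"] by simp
  ultimately show ?case by (meson converse_rtranclp_into_rtranclp rtranclp_trans)
qed simp

lemma cfg_lang_iff_derives: "w \<in> cfg_lang P S \<longleftrightarrow> derives P [Inl S] w"
proof
  assume "w \<in> cfg_lang P S"
  then have "(cfg_step P)\<^sup>*\<^sup>* [Inl S] (map Inr w)" unfolding cfg_lang_def by simp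
  then show "derives P [Inl S] w"
    by (induction rule: converse_rtranclp_induct) (auto intro: derives_map_Inr cfg_step_derives)
next
  assume "derives P [Inl S] w"
  from derives_cfg_steps[OF this] show "w \<in> cfg_lang P S" by (simp add: cfg_lang_def)
qed

section \<open>Short derivations through a transducer\<close>

lemma lfp_eq_Kleene_iter_card:
  fixes \<Phi> :: "'x set \<Rightarrow> 'x set"
  assumes mono: "mono \<Phi>" and bounded: "\<And>S. \<Phi> S \<subseteq> U" and "finite U"
  shows "lfp \<Phi> = (\<Phi> ^^ card U) {}"
proof -
  define H where "H k = (\<Phi> ^^ k) {}" for k
  have H_mono: "j \<le> k \<Longrightarrow> H j \<subseteq> H k" for j k
    using funpow_decreasing[OF _ mono] unfolding H_def by (metis bot_set_def)
  have H_U: "H k \<subseteq> U" for k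
    unfolding H_def by (cases k) (auto intro: bounded[THEN subsetD])
  have "\<exists>j \<le> card U. H (Suc j) = H j"
  proof (rule ccontr)
    assume "\<not> ?thesis"
    then have "j \<le> card (H j)" if "j \<le> card U + 1" for j
      using that
    proof (induction j)
      case (Suc j)
      then have "H j \<subset> H (Suc j)" using H_mono[of j "Suc j"] by fastforce
      then have "card (H j) < card (H (Suc j))"
        using H_U \<open>finite U\<close> by (meson psubset_card_mono rev_finite_subset)
      with Suc show ?case by simp
    qed simp
    moreover have "card (H (card U + 1)) \<le> card U"
      using H_U \<open>finite U\<close> by (simp add: card_mono)
    ultimately show False by fastforce
  qed
  then obtain j where "j \<le> card U" "H (Suc j) = H j" by blast
  then have "lfp \<Phi> = H j" and "H j \<subseteq> H (card U)"
    using lfp_Kleene_iter[OF mono] H_mono unfolding H_def by (auto simp: bot_set_def)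
  moreover have "H (card U) \<subseteq> lfp \<Phi>"
    using Kleene_iter_lpfp[OF mono] lfp_fixpoint[OF mono] unfolding H_def by (simp add: bot_set_def)
  ultimately show ?thesis unfolding H_def by blast
qed

text \<open>\<open>length_bound N n\<close> bounds the length of a shortest derivation with output of length \<open>n\<close>,
  where \<open>N\<close> is the number of configurations. The slack \<open>N * silent_slack N\<close> in the
  superadditivity lemmas below pays for the \<open>N\<close> rounds of silent extension.\<close>
definition silent_slack :: "nat \<Rightarrow> nat" where
  "silent_slack N = 2 ^ N + 1"

definition pump_const :: "nat \<Rightarrow> nat" where
  "pump_const N = 2 ^ N + 1 + N * silent_slack N"

definition length_bound :: "nat \<Rightarrow> nat \<Rightarrow> nat" where
  "length_bound N n = (if n = 0 then 2 ^ N else pump_const N * (2 * n - 1))"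

lemma length_bound_Suc: "length_bound N (Suc n) = pump_const N * (2 * n + 1)"
  unfolding length_bound_def by simp

lemma length_bound_ge: "n \<noteq> 0 \<Longrightarrow> N * silent_slack N < length_bound N n"
  by (cases n) (auto simp: length_bound_Suc pump_const_def)

lemma length_bound_less:
  assumes "m < n" shows "length_bound N m + N * silent_slack N < length_bound N n"
proof (cases m)
  case 0
  with assms show ?thesis
    by (cases n) (auto simp: length_bound_def pump_const_def intro: trans_le_add1)
next
  case (Suc m')
  with assms obtain n' where "n = Suc n'" "m' < n'" by (cases n) auto
  then have "pump_const N * (2 * m' + 1) + 2 * pump_const N \<le> pump_const N * (2 * n' + 1)"
    using mult_le_mono2[of "2 * m' + 3" "2 * n' + 1" "pump_const N"] by (simp add: algebra_simps)
  then show ?thesis using Suc \<open>n = Suc n'\<close> by (simp add: length_bound_Suc pump_const_def)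
qed

lemma length_bound_add:
  assumes "m1 \<noteq> 0" "m2 \<noteq> 0"
  shows "length_bound N m1 + length_bound N m2 + N * silent_slack N \<le> length_bound N (m1 + m2)"
proof -
  obtain a b where "m1 = Suc a" "m2 = Suc b" using assms by (cases m1; cases m2) auto
  then show ?thesis by (simp add: length_bound_Suc pump_const_def algebra_simps)
qed

lemma length_bound_le_linear: "length_bound N n \<le> 2 * pump_const N * (n + 1)"
  by (cases n) (simp_all add: length_bound_def length_bound_Suc pump_const_def algebra_simps)

type_synonym 'a config = "(nat + 'a) list \<times> nat \<times> nat"

locale grammar_transducer =
  fixes P :: "(nat \<times> (nat + 'a) list) set" and T :: "('a, 'b) transducer"
    and Q :: "nat set" and forms :: "(nat + 'a) list set"
  assumes finite_Q: "finite Q" and finite_forms: "finite forms"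
    and transition_closed: "(p, l, q) \<in> T \<Longrightarrow> p \<in> Q \<Longrightarrow> q \<in> Q"
    and forms_tl_closed: "x # \<beta> \<in> forms \<Longrightarrow> \<beta> \<in> forms"
    and forms_rhs_closed: "Inl A # \<beta> \<in> forms \<Longrightarrow> (A, rhs) \<in> P \<Longrightarrow> rhs \<in> forms"
begin

lemma run_closed: "run T p u v q \<Longrightarrow> p \<in> Q \<Longrightarrow> q \<in> Q"
  by (induction rule: run.induct) (auto intro: transition_closed)

definition configs :: "'a config set" where
  "configs = forms \<times> Q \<times> Q"

lemma mem_configs_iff: "(\<alpha>, p, q) \<in> configs \<longleftrightarrow> \<alpha> \<in> forms \<and> p \<in> Q \<and> q \<in> Q"
  unfolding configs_def by simp

lemma finite_configs: "finite configs"
  unfolding configs_def using finite_Q finite_forms by simp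

lemma configs_tl:
  "(x # \<beta>, p, q) \<in> configs \<Longrightarrow> run T p u v r \<Longrightarrow> (\<beta>, r, q) \<in> configs"
  unfolding configs_def using forms_tl_closed run_closed by blast

lemma configs_rhs:
  "(Inl A # \<beta>, p, q) \<in> configs \<Longrightarrow> (A, rhs) \<in> P \<Longrightarrow> run T p u v r \<Longrightarrow> (rhs, p, r) \<in> configs"
  unfolding configs_def using forms_rhs_closed run_closed by blast

abbreviation n_configs :: nat where
  "n_configs \<equiv> card configs"

text \<open>Configurations \<open>(\<alpha>, p, q)\<close> such that \<open>\<alpha>\<close> derives a word leading from \<open>p\<close> to \<open>q\<close> without
  output: the least fixpoint of \<open>silent_step\<close>, reached in \<open>n_configs\<close> rounds, each of which at
  most doubles the length of the shortest witness.\<close>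
definition silent_step :: "'a config set \<Rightarrow> 'a config set" where
  "silent_step S = configs \<inter> {(\<alpha>, p, q).
     (\<alpha> = [] \<and> run T p [] [] q) \<or>
     (\<exists>a \<beta> r. \<alpha> = Inr a # \<beta> \<and> run T p [a] [] r \<and> (\<beta>, r, q) \<in> S) \<or>
     (\<exists>A \<beta> rhs r. \<alpha> = Inl A # \<beta> \<and> (A, rhs) \<in> P \<and> (rhs, p, r) \<in> S \<and> (\<beta>, r, q) \<in> S)}"

lemma mono_silent_step: "mono silent_step"
  unfolding mono_def silent_step_def by blast

lemma silent_iter_witness:
  "(\<alpha>, p, q) \<in> (silent_step ^^ k) {} \<Longrightarrow>
     \<exists>u. derives P \<alpha> u \<and> run T p u [] q \<and> length u \<le> 2 ^ k"
proof (induction k arbitrary: \<alpha> p q)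
  case (Suc k)
  then have "(\<alpha>, p, q) \<in> silent_step ((silent_step ^^ k) {})" by simp
  then consider "\<alpha> = []" "run T p [] [] q"
    | a \<beta> r where "\<alpha> = Inr a # \<beta>" "run T p [a] [] r" "(\<beta>, r, q) \<in> (silent_step ^^ k) {}"
    | A \<beta> rhs r where "\<alpha> = Inl A # \<beta>" "(A, rhs) \<in> P"
        "(rhs, p, r) \<in> (silent_step ^^ k) {}" "(\<beta>, r, q) \<in> (silent_step ^^ k) {}"
    unfolding silent_step_def by blast
  then show ?case
  proof cases
    case 1
    then show ?thesis by (intro exI[of _ "[]"]) simp
  next
    case (2 a \<beta> r)
    with Suc.IH obtain u where "derives P \<beta> u" "run T r u [] q" "length u \<le> 2 ^ k" by blast
    moreover have "length (a # u) \<le> 2 ^ Suc k"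
      using \<open>length u \<le> 2 ^ k\<close> one_le_power[of "2 :: nat" k] by (simp only: length_Cons power_Suc) linarith
    moreover have "run T p (a # u) [] q" using run_append[OF 2(2) \<open>run T r u [] q\<close>] by simp
    ultimately show ?thesis using 2(1) by (intro exI[of _ "a # u"]) simp
  next
    case (3 A \<beta> rhs r)
    with Suc.IH obtain u1 u2 where "derives P rhs u1" "run T p u1 [] r" "length u1 \<le> 2 ^ k"
      "derives P \<beta> u2" "run T r u2 [] q" "length u2 \<le> 2 ^ k" by meson
    then show ?thesis
      using 3 run_append[of T p u1 "[]" r u2 "[]" q] by (intro exI[of _ "u1 @ u2"]) auto
  qed
qed simp

lemma silent_lfp_complete:
  "derives P \<alpha> u \<Longrightarrow> run T p u [] q \<Longrightarrow> (\<alpha>, p, q) \<in> configs \<Longrightarrow> (\<alpha>, p, q) \<in> lfp silent_step"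
proof (induction arbitrary: p q rule: derives.induct)
  case derives_nil
  then have "([], p, q) \<in> silent_step (lfp silent_step)" unfolding silent_step_def by blast
  then show ?case using lfp_fixpoint[OF mono_silent_step] by blast
next
  case (derives_terminal \<alpha> w a)
  from run_split[of T p "[a]" w "[]" q] derives_terminal.prems(1) obtain r
    where r: "run T p [a] [] r" "run T r w [] q" by auto
  with derives_terminal have "(\<alpha>, r, q) \<in> lfp silent_step" by (blast intro: configs_tl)
  with r derives_terminal.prems(2) have "(Inr a # \<alpha>, p, q) \<in> silent_step (lfp silent_step)"
    unfolding silent_step_def by blast
  then show ?case using lfp_fixpoint[OF mono_silent_step] by blast
next
  case (derives_nonterminal A rhs w1 \<alpha> w2)
  from run_split[of T p w1 w2 "[]" q] derives_nonterminal.prems(1) obtain r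
    where r: "run T p w1 [] r" "run T r w2 [] q" by auto
  with derives_nonterminal have "(rhs, p, r) \<in> lfp silent_step" "(\<alpha>, r, q) \<in> lfp silent_step"
    by (blast intro: configs_rhs configs_tl)+
  with derives_nonterminal have "(Inl A # \<alpha>, p, q) \<in> silent_step (lfp silent_step)"
    unfolding silent_step_def by blast
  then show ?case using lfp_fixpoint[OF mono_silent_step] by blast
qed

lemma lfp_silent_step: "lfp silent_step = (silent_step ^^ n_configs) {}"
  by (rule lfp_eq_Kleene_iter_card[OF mono_silent_step _ finite_configs])
    (auto simp: silent_step_def)

lemma short_silent_derivation:
  assumes "(\<alpha>, p, q) \<in> configs" "derives P \<alpha> u" "run T p u [] q"
  shows "\<exists>u'. derives P \<alpha> u' \<and> run T p u' [] q \<and> length u' \<le> 2 ^ n_configs"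
  using silent_lfp_complete[OF assms(2,3,1)] silent_iter_witness by (simp add: lfp_silent_step)

text \<open>For a nonempty output \<open>y\<close>: either the output is split into nonempty parts among the
  children of the derivation (\<open>output_base\<close>, handled by induction on \<open>|y|\<close>), or one child produces
  all of \<open>y\<close> and the others nothing (\<open>silent_extension\<close>, whose iteration again stabilises after
  \<open>n_configs\<close> rounds, each adding at most \<open>silent_slack n_configs\<close> letters).\<close>
definition output_base :: "'b list \<Rightarrow> 'a config set" where
  "output_base y = {(\<alpha>, p, q).
     (\<alpha> = [] \<and> run T p [] y q) \<or>
     (\<exists>a \<beta> r y1 y2 w. \<alpha> = Inr a # \<beta> \<and> y = y1 @ y2 \<and> y1 \<noteq> [] \<and>
        run T p [a] y1 r \<and> derives P \<beta> w \<and> run T r w y2 q) \<or>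
     (\<exists>A \<beta> rhs r y1 y2 w1 w2. \<alpha> = Inl A # \<beta> \<and> (A, rhs) \<in> P \<and> y = y1 @ y2 \<and> y1 \<noteq> [] \<and> y2 \<noteq> [] \<and>
        derives P rhs w1 \<and> run T p w1 y1 r \<and> derives P \<beta> w2 \<and> run T r w2 y2 q)}"

definition silent_extension :: "'a config set \<Rightarrow> 'a config set" where
  "silent_extension S = {(\<alpha>, p, q).
     (\<exists>a \<beta> r. \<alpha> = Inr a # \<beta> \<and> run T p [a] [] r \<and> (\<beta>, r, q) \<in> S) \<or>
     (\<exists>A \<beta> rhs r w. \<alpha> = Inl A # \<beta> \<and> (A, rhs) \<in> P \<and> derives P rhs w \<and> run T p w [] r \<and>
        (\<beta>, r, q) \<in> S) \<or>
     (\<exists>A \<beta> rhs r w. \<alpha> = Inl A # \<beta> \<and> (A, rhs) \<in> P \<and> (rhs, p, r) \<in> S \<and> derives P \<beta> w \<and>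
        run T r w [] q)}"

definition output_step :: "'b list \<Rightarrow> 'a config set \<Rightarrow> 'a config set" where
  "output_step y S = configs \<inter> (output_base y \<union> silent_extension S)"

lemma mono_output_step: "mono (output_step y)"
  unfolding mono_def output_step_def silent_extension_def by blast

lemma lfp_output_step: "lfp (output_step y) = (output_step y ^^ n_configs) {}"
  by (rule lfp_eq_Kleene_iter_card[OF mono_output_step _ finite_configs])
    (auto simp: output_step_def)

lemma silent_extension_witness:
  assumes "(\<alpha>, p, q) \<in> silent_extension S" "(\<alpha>, p, q) \<in> configs"
    and S: "\<And>\<beta> r s. (\<beta>, r, s) \<in> S \<Longrightarrow> \<exists>u. derives P \<beta> u \<and> run T r u y s \<and> length u + D \<le> L"
  shows "\<exists>u. derives P \<alpha> u \<and> run T p u y q \<and> length u + D \<le> L + silent_slack n_configs"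
proof -
  have slack: "1 \<le> silent_slack n_configs" "2 ^ n_configs \<le> silent_slack n_configs"
    unfolding silent_slack_def by simp_all
  from assms(1) consider a \<beta> r where "\<alpha> = Inr a # \<beta>" "run T p [a] [] r" "(\<beta>, r, q) \<in> S"
    | A \<beta> rhs r w where "\<alpha> = Inl A # \<beta>" "(A, rhs) \<in> P" "derives P rhs w" "run T p w [] r"
        "(\<beta>, r, q) \<in> S"
    | A \<beta> rhs r w where "\<alpha> = Inl A # \<beta>" "(A, rhs) \<in> P" "(rhs, p, r) \<in> S" "derives P \<beta> w"
        "run T r w [] q"
    unfolding silent_extension_def by blast
  then show ?thesis
  proof cases
    case (1 a \<beta> r)
    with S obtain u where "derives P \<beta> u" "run T r u y q" "length u + D \<le> L" by blast
    with 1 slack show ?thesis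
      using run_append[OF 1(2), of u y q] by (intro exI[of _ "a # u"]) simp
  next
    case (2 A \<beta> rhs r w)
    with assms(2) short_silent_derivation obtain w' where
      "derives P rhs w'" "run T p w' [] r" "length w' \<le> 2 ^ n_configs"
      by (meson configs_rhs)
    moreover from 2 S obtain u where "derives P \<beta> u" "run T r u y q" "length u + D \<le> L" by blast
    ultimately show ?thesis
      using 2 slack run_append[of T p w' "[]" r u y q] by (intro exI[of _ "w' @ u"]) auto
  next
    case (3 A \<beta> rhs r w)
    with S obtain u where "derives P rhs u" "run T p u y r" "length u + D \<le> L" by blast
    moreover from this(2) 3 assms(2) short_silent_derivation obtain w' where
      "derives P \<beta> w'" "run T r w' [] q" "length w' \<le> 2 ^ n_configs"
      by (meson configs_tl)
    ultimately show ?thesis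
      using 3 slack run_append[of T p u y r w' "[]" q] by (intro exI[of _ "u @ w'"]) auto
  qed
qed

lemma output_base_witness:
  assumes "(\<alpha>, p, q) \<in> output_base y" "(\<alpha>, p, q) \<in> configs" "y \<noteq> []"
    and shorter: "\<And>y' \<beta> r s u. length y' < length y \<Longrightarrow> (\<beta>, r, s) \<in> configs \<Longrightarrow>
      derives P \<beta> u \<Longrightarrow> run T r u y' s \<Longrightarrow>
      \<exists>u'. derives P \<beta> u' \<and> run T r u' y' s \<and> length u' \<le> length_bound n_configs (length y')"
  shows "\<exists>u. derives P \<alpha> u \<and> run T p u y q \<and>
    length u + n_configs * silent_slack n_configs \<le> length_bound n_configs (length y)"
proof -
  from assms(1) consider "\<alpha> = []" "run T p [] y q"
    | a \<beta> r y1 y2 w where "\<alpha> = Inr a # \<beta>" "y = y1 @ y2" "y1 \<noteq> []" "run T p [a] y1 r"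
        "derives P \<beta> w" "run T r w y2 q"
    | A \<beta> rhs r y1 y2 w1 w2 where "\<alpha> = Inl A # \<beta>" "(A, rhs) \<in> P" "y = y1 @ y2" "y1 \<noteq> []"
        "y2 \<noteq> []" "derives P rhs w1" "run T p w1 y1 r" "derives P \<beta> w2" "run T r w2 y2 q"
    unfolding output_base_def by blast
  then show ?thesis
  proof cases
    case 1
    with length_bound_ge[of "length y" n_configs] \<open>y \<noteq> []\<close> show ?thesis
      by (intro exI[of _ "[]"]) simp
  next
    case (2 a \<beta> r y1 y2 w)
    then have "length y2 < length y" by simp
    with 2 assms(2) shorter obtain w' where
      "derives P \<beta> w'" "run T r w' y2 q" "length w' \<le> length_bound n_configs (length y2)"
      by (meson configs_tl)
    with 2 length_bound_less[OF \<open>length y2 < length y\<close>, of n_configs] show ?thesis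
      using run_append[OF 2(4), of w' y2 q] by (intro exI[of _ "a # w'"]) simp
  next
    case (3 A \<beta> rhs r y1 y2 w1 w2)
    then have "length y1 < length y" "length y2 < length y" by simp_all
    with 3 assms(2) shorter obtain w1' w2' where
      "derives P rhs w1'" "run T p w1' y1 r" "length w1' \<le> length_bound n_configs (length y1)"
      "derives P \<beta> w2'" "run T r w2' y2 q" "length w2' \<le> length_bound n_configs (length y2)"
      by (meson configs_rhs configs_tl)
    with 3 length_bound_add[of "length y1" "length y2" n_configs] show ?thesis
      using run_append[of T p w1' y1 r w2' y2 q] by (intro exI[of _ "w1' @ w2'"]) auto
  qed
qed

lemma output_iter_witness:
  assumes "y \<noteq> []"
    and shorter: "\<And>y' \<beta> r s u. length y' < length y \<Longrightarrow> (\<beta>, r, s) \<in> configs \<Longrightarrow>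
      derives P \<beta> u \<Longrightarrow> run T r u y' s \<Longrightarrow>
      \<exists>u'. derives P \<beta> u' \<and> run T r u' y' s \<and> length u' \<le> length_bound n_configs (length y')"
  shows "(\<alpha>, p, q) \<in> (output_step y ^^ k) {} \<Longrightarrow>
    \<exists>u. derives P \<alpha> u \<and> run T p u y q \<and>
      length u + n_configs * silent_slack n_configs \<le> length_bound n_configs (length y) + k * silent_slack n_configs"
proof (induction k arbitrary: \<alpha> p q)
  case (Suc k)
  then have "(\<alpha>, p, q) \<in> output_step y ((output_step y ^^ k) {})" by simp
  then have "(\<alpha>, p, q) \<in> configs"
    and "(\<alpha>, p, q) \<in> output_base y \<or> (\<alpha>, p, q) \<in> silent_extension ((output_step y ^^ k) {})"
    unfolding output_step_def[of y "(output_step y ^^ k) {}"] by blast+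
  then show ?case
  proof (elim disjE)
    assume "(\<alpha>, p, q) \<in> output_base y"
    with output_base_witness[OF _ \<open>(\<alpha>, p, q) \<in> configs\<close> assms] show ?thesis by fastforce
  next
    assume "(\<alpha>, p, q) \<in> silent_extension ((output_step y ^^ k) {})"
    from silent_extension_witness[OF this \<open>(\<alpha>, p, q) \<in> configs\<close> Suc.IH] show ?thesis
      by (simp add: algebra_simps)
  qed
qed simp

lemma output_lfp_complete:
  "derives P \<alpha> u \<Longrightarrow> run T p u y q \<Longrightarrow> (\<alpha>, p, q) \<in> configs \<Longrightarrow> (\<alpha>, p, q) \<in> lfp (output_step y)"
proof (induction arbitrary: p q rule: derives.induct)
  have fold: "c \<in> lfp (output_step y)" if "c \<in> configs" "c \<in> output_base y \<union> silent_extension (lfp (output_step y))" for c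
    using that lfp_fixpoint[OF mono_output_step, of y] unfolding output_step_def by blast
  {
    case derives_nil
    then show ?case by (intro fold) (auto simp: output_base_def)
  next
    case (derives_terminal \<alpha> w a)
    from run_split[of T p "[a]" w y q] derives_terminal.prems(1) obtain r y1 y2
      where r: "y = y1 @ y2" "run T p [a] y1 r" "run T r w y2 q" by auto
    with derives_terminal have IH: "(\<alpha>, r, q) \<in> lfp (output_step y)" if "y1 = []"
      using that by (auto intro: configs_tl)
    from derives_terminal.prems(2) show ?case
    proof (rule fold)
      show "(Inr a # \<alpha>, p, q) \<in> output_base y \<union> silent_extension (lfp (output_step y))"
      proof (cases "y1 = []")
        case True
        with r IH show ?thesis unfolding silent_extension_def by auto
      next
        case False
        with r derives_terminal.hyps show ?thesis unfolding output_base_def by blast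
      qed
    qed
  next
    case (derives_nonterminal A rhs w1 \<alpha> w2)
    from run_split[of T p w1 w2 y q] derives_nonterminal.prems(1) obtain r y1 y2
      where r: "y = y1 @ y2" "run T p w1 y1 r" "run T r w2 y2 q" by auto
    have cfg: "(rhs, p, r) \<in> configs" "(\<alpha>, r, q) \<in> configs"
      using derives_nonterminal r by (blast intro: configs_rhs configs_tl)+
    from derives_nonterminal.prems(2) show ?case
    proof (rule fold)
      consider "y1 = []" | "y2 = []" | "y1 \<noteq> []" "y2 \<noteq> []" by blast
      then show "(Inl A # \<alpha>, p, q) \<in> output_base y \<union> silent_extension (lfp (output_step y))"
      proof cases
        case 1
        with r cfg derives_nonterminal have "(\<alpha>, r, q) \<in> lfp (output_step y)" by simp
        with 1 r derives_nonterminal.hyps show ?thesis unfolding silent_extension_def by auto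
      next
        case 2
        with r cfg derives_nonterminal have "(rhs, p, r) \<in> lfp (output_step y)" by simp
        with 2 r derives_nonterminal.hyps show ?thesis unfolding silent_extension_def by auto
      next
        case 3
        with r derives_nonterminal.hyps show ?thesis unfolding output_base_def by blast
      qed
    qed
  }
qed

lemma short_derivation:
  "(\<alpha>, p, q) \<in> configs \<Longrightarrow> derives P \<alpha> u \<Longrightarrow> run T p u y q \<Longrightarrow>
    \<exists>u'. derives P \<alpha> u' \<and> run T p u' y q \<and> length u' \<le> length_bound n_configs (length y)"
proof (induction "length y" arbitrary: y \<alpha> p q u rule: less_induct)
  case less
  show ?case
  proof (cases "y = []")
    case True
    with short_silent_derivation less.prems show ?thesis by (simp add: length_bound_def)
  next
    case False
    from output_lfp_complete[OF less.prems(2,3,1)] have "(\<alpha>, p, q) \<in> (output_step y ^^ n_configs) {}"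
      by (simp add: lfp_output_step)
    with output_iter_witness[OF False less.hyps] show ?thesis by fastforce
  qed
qed

end

lemma rational_context_free_short_preimage:
  fixes t :: "'a list \<Rightarrow> 'b list option"
  assumes "rational_pfun t" "context_free X"
  obtains L where "L \<ge> 1"
    "\<And>u v. u \<in> X \<Longrightarrow> t u = Some v \<Longrightarrow> \<exists>u'\<in>X. t u' = Some v \<and> length u' \<le> L * (length v + 1)"
proof -
  from assms(1) have "transducer_rel (graph t)"
    unfolding rational_pfun_def by (rule rational_sets_transducer_rel)
  then obtain I F and T :: "('a, 'b) transducer" where "finite I" "finite T"
    and graph: "graph t = accepted I F T"
    unfolding transducer_rel_def by blast
  from assms(2) obtain P S where "finite P" and X: "X = cfg_lang P S"
    unfolding context_free_def by blast
  define Q where "Q = I \<union> (snd \<circ> snd) ` T"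
  define forms where "forms = (\<Union>x\<in>P. set (suffixes (snd x))) \<union> set (suffixes [Inl S])"
  interpret grammar_transducer P T Q forms
  proof
    show "finite Q" "finite forms"
      unfolding Q_def forms_def using \<open>finite I\<close> \<open>finite T\<close> \<open>finite P\<close> by simp_all
    show "q \<in> Q" if "(p, l, q) \<in> T" for p l q
      using that unfolding Q_def by force
    show "\<beta> \<in> forms" if "x # \<beta> \<in> forms" for x \<beta>
      using that unfolding forms_def by (auto dest: suffix_ConsD)
    show "rhs \<in> forms" if "(A, rhs) \<in> P" for A rhs
      using that unfolding forms_def by force
  qed
  define L where "L = 2 * pump_const n_configs"
  show thesis
  proof
    show "L \<ge> 1" unfolding L_def pump_const_def by simp
    fix u v assume "u \<in> X" "t u = Some v"
    then obtain p q where "p \<in> I" "q \<in> F" and r: "run T p u v q"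
      using graph unfolding graph_def accepted_def by blast
    moreover have "([Inl S], p, q) \<in> configs"
      using \<open>p \<in> I\<close> run_closed[OF r] unfolding mem_configs_iff by (simp add: Q_def forms_def)
    ultimately obtain u' where "derives P [Inl S] u'" "run T p u' v q"
      "length u' \<le> length_bound n_configs (length v)"
      using short_derivation \<open>u \<in> X\<close> unfolding X cfg_lang_iff_derives by blast
    moreover from this(2) have "t u' = Some v"
      using \<open>p \<in> I\<close> \<open>q \<in> F\<close> graph unfolding graph_def accepted_def by blast
    moreover have "length u' \<le> L * (length v + 1)"
      using \<open>length u' \<le> length_bound n_configs (length v)\<close> length_bound_le_linear
      unfolding L_def by (rule le_trans)
    ultimately show "\<exists>u'\<in>X. t u' = Some v \<and> length u' \<le> L * (length v + 1)"
      unfolding X cfg_lang_iff_derives[symmetric] by blast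
  qed
qed

section \<open>Growth\<close>

lemma finite_pimage: "finite A \<Longrightarrow> finite (pimage f A)"
proof -
  assume "finite A"
  moreover have "pimage f A \<subseteq> (\<lambda>u. the (f u)) ` A"
    unfolding pimage_def by force
  ultimately show ?thesis using finite_subset by blast
qed

lemma finite_words_length_le: "finite {w :: 'a :: finite list. length w \<le> n}"
  using finite_lists_length_le[of "UNIV :: 'a set" n] by simp

lemma lang_growth_le_f_growth:
  fixes f :: "'a :: finite list \<Rightarrow> 'b list option"
  assumes short: "\<And>u v. u \<in> X \<Longrightarrow> f u = Some v \<Longrightarrow>
    \<exists>u'\<in>X. f u' = Some v \<and> length u' \<le> L * (length v + 1)"
  shows "lang_growth (pimage f X) n \<le> f_growth f X (L * (n + 1))"
proof -
  have "pimage f X \<inter> {v. length v \<le> n} \<subseteq> pimage f (X \<inter> {w. length w \<le> L * (n + 1)})"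
  proof clarify
    fix v assume "v \<in> pimage f X" "length v \<le> n"
    then obtain u' where "u' \<in> X" "f u' = Some v" "length u' \<le> L * (length v + 1)"
      using short unfolding pimage_def by blast
    moreover have "L * (length v + 1) \<le> L * (n + 1)" using \<open>length v \<le> n\<close> by simp
    ultimately have "length u' \<le> L * (n + 1)" by linarith
    with \<open>u' \<in> X\<close> \<open>f u' = Some v\<close> have "u' \<in> X \<inter> {w. length w \<le> L * (n + 1)}" "f u' = Some v"
      by simp_all
    then show "v \<in> pimage f (X \<inter> {w. length w \<le> L * (n + 1)})"
      unfolding pimage_def by blast
  qed
  then show ?thesis unfolding lang_growth_def f_growth_def
    by (intro card_mono finite_pimage) (simp_all add: finite_words_length_le)
qed

lemma f_growth_le_suffix_expansion:
  fixes t :: "'a :: finite list \<Rightarrow> 'b list option"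
  shows "f_growth t X n \<le> f_growth (suffix_expansion t) X n + 1"
proof -
  define A where "A = X \<inter> {w. length w \<le> n}"
  have "finite A" unfolding A_def by (simp add: finite_words_length_le)
  have "pimage t A \<subseteq> insert (the (t [])) (hd ` pimage (suffix_expansion t) A)"
  proof
    fix v assume "v \<in> pimage t A"
    then obtain u where "u \<in> A" "t u = Some v" unfolding pimage_def by blast
    moreover have "hd (map (\<lambda>i. the (t (drop i u))) [0..<length u]) = v" if "u \<noteq> []"
      using that \<open>t u = Some v\<close> by (simp add: hd_map upt_conv_Cons)
    ultimately show "v \<in> insert (the (t [])) (hd ` pimage (suffix_expansion t) A)"
      unfolding pimage_def suffix_expansion_def by (cases "u = []") (auto simp: domI)
  qed
  then have "card (pimage t A) \<le> card (insert (the (t [])) (hd ` pimage (suffix_expansion t) A))"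
    using \<open>finite A\<close> by (intro card_mono finite_insert[THEN iffD2] finite_imageI finite_pimage)
  also have "\<dots> \<le> card (hd ` pimage (suffix_expansion t) A) + 1"
    by (simp add: card_insert_if finite_pimage[OF \<open>finite A\<close>])
  also have "\<dots> \<le> card (pimage (suffix_expansion t) A) + 1"
    using card_image_le[OF finite_pimage[OF \<open>finite A\<close>]] by simp
  finally show ?thesis unfolding f_growth_def A_def .
qed

lemma grows_exponentially_linear_reparam:
  fixes \<gamma> \<gamma>' :: "nat \<Rightarrow> nat"
  assumes "L \<ge> 1" and le: "\<And>n. \<gamma> n \<le> \<gamma>' (L * (n + 1))" and "grows_exponentially \<gamma>"
  shows "grows_exponentially \<gamma>'"
proof -
  from assms(3) obtain c :: real where "c > 1" and inf: "infinite {n. c ^ n \<le> real (\<gamma> n)}"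
    unfolding grows_exponentially_def by blast
  define d where "d = c powr (1 / (2 * real L))"
  have "c powr 0 < d" unfolding d_def using \<open>c > 1\<close> \<open>L \<ge> 1\<close> by (intro powr_less_mono) auto
  then have "d > 1" using \<open>c > 1\<close> by simp
  define S where "S = {n. c ^ n \<le> real (\<gamma> n)} - {0}"
  have sub: "(\<lambda>n. L * (n + 1)) ` S \<subseteq> {m. d ^ m \<le> real (\<gamma>' m)}"
  proof clarify
    fix n assume "n \<in> S"
    then have "n \<ge> 1" "c ^ n \<le> real (\<gamma> n)" unfolding S_def by auto
    have exponent: "1 / (2 * real L) * real (L * (n + 1)) = (real n + 1) / 2"
      using \<open>L \<ge> 1\<close> by (simp add: field_simps)
    have "d ^ (L * (n + 1)) = d powr real (L * (n + 1))" using \<open>d > 1\<close> by (simp only: powr_realpow)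
    also have "\<dots> = c powr ((real n + 1) / 2)" unfolding d_def powr_powr exponent ..
    also have "\<dots> \<le> c powr real n" using \<open>c > 1\<close> \<open>n \<ge> 1\<close> by (intro powr_mono) auto
    also have "\<dots> \<le> real (\<gamma> n)" using \<open>c > 1\<close> \<open>c ^ n \<le> real (\<gamma> n)\<close> by (simp add: powr_realpow)
    also have "\<dots> \<le> real (\<gamma>' (L * (n + 1)))" using le[of n] by simp
    finally show "d ^ (L * (n + 1)) \<le> real (\<gamma>' (L * (n + 1)))" .
  qed
  have "inj_on (\<lambda>n. L * (n + 1)) S" using \<open>L \<ge> 1\<close> by (intro inj_onI) simp
  moreover have "infinite S" unfolding S_def using inf by simp
  ultimately have "infinite {m. d ^ m \<le> real (\<gamma>' m)}"
    using finite_imageD infinite_super[OF sub] by blast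
  with \<open>d > 1\<close> show ?thesis unfolding grows_exponentially_def by blast
qed

lemma grows_exponentially_add_const:
  fixes \<gamma> \<gamma>' :: "nat \<Rightarrow> nat"
  assumes le: "\<And>n. \<gamma> n \<le> \<gamma>' n + C" and "grows_exponentially \<gamma>"
  shows "grows_exponentially \<gamma>'"
proof -
  from assms(2) obtain c :: real where "c > 1" and inf: "infinite {n. c ^ n \<le> real (\<gamma> n)}"
    unfolding grows_exponentially_def by blast
  define d where "d = sqrt c"
  have "d > 1" unfolding d_def using \<open>c > 1\<close> by simp
  then obtain m0 where m0: "real C + 1 < d ^ m0" using real_arch_pow by blast
  have sub: "{n. c ^ n \<le> real (\<gamma> n)} - {..<m0} \<subseteq> {m. d ^ m \<le> real (\<gamma>' m)}"
  proof clarify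
    fix m assume "c ^ m \<le> real (\<gamma> m)" "\<not> m < m0"
    have "d ^ m0 \<le> d ^ m" using \<open>\<not> m < m0\<close> \<open>d > 1\<close> by (intro power_increasing) auto
    with m0 have big: "real C + 1 \<le> d ^ m" by simp
    have "1 \<le> d ^ m" using big of_nat_0_le_iff[of C] by linarith
    then have "d ^ m + real C \<le> d ^ m + real C * d ^ m" by (simp add: mult_le_cancel_left1)
    also have "\<dots> = (real C + 1) * d ^ m" by (simp add: algebra_simps)
    also have "\<dots> \<le> d ^ m * d ^ m" using big by (intro mult_right_mono) auto
    also have "\<dots> = c ^ m" unfolding d_def using \<open>c > 1\<close> by (simp add: power_mult_distrib[symmetric])
    also have "\<dots> \<le> real (\<gamma>' m) + real C" using \<open>c ^ m \<le> real (\<gamma> m)\<close> le[of m] by linarith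
    finally show "d ^ m \<le> real (\<gamma>' m)" by simp
  qed
  have "infinite ({n. c ^ n \<le> real (\<gamma> n)} - {..<m0})" using inf by simp
  then have "infinite {m. d ^ m \<le> real (\<gamma>' m)}" using infinite_super[OF sub] by blast
  with \<open>d > 1\<close> show ?thesis unfolding grows_exponentially_def by blast
qed

theorem proposition3:
  fixes t :: "('a::finite) list \<Rightarrow> ('b::finite) list option"
    and X :: "'a list set"
  assumes "rational_pfun t"
    and "suffix_closed (dom t)"
    and "X \<subseteq> dom t"
    and "context_free X"
    and "grows_exponentially (lang_growth (pimage t X))"
  shows "grows_exponentially (f_growth t X)
       \<and> grows_exponentially (f_growth (suffix_expansion t) X)"
proof -
  obtain L where "L \<ge> 1" and short: "\<And>u v. u \<in> X \<Longrightarrow> t u = Some v \<Longrightarrow>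
      \<exists>u'\<in>X. t u' = Some v \<and> length u' \<le> L * (length v + 1)"
    using rational_context_free_short_preimage[OF assms(1,4)] by blast
  have "grows_exponentially (f_growth t X)"
    using grows_exponentially_linear_reparam[OF \<open>L \<ge> 1\<close> lang_growth_le_f_growth[OF short] assms(5)] .
  moreover from this have "grows_exponentially (f_growth (suffix_expansion t) X)"
    by (rule grows_exponentially_add_const[OF f_growth_le_suffix_expansion])
  ultimately show ?thesis ..
qed

end
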